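(* For every measurable classifier $f:\mathcal X\to\mathbb R$ and every loss $\ell:\mathbb R\times\{-1,+1\}\to\mathbb R_{+}$ for which the expectations below are finite, $$\mathbb E_{\tilde{\mathcal D}}\bigl[\ell_{\mathrm{peer}}(f(X),\tilde Y)\bigr]=(1-e_{-1}-e_{+1})\cdot\mathbb E_{\mathcal D}\bigl[\ell_{\mathrm{peer}}(f(X),Y)\bigr].$$
   Context: Let $\mathcal X\subseteq\mathbb R^d$ and let $(X,Y)$ be a random pair with distribution $\mathcal D$ on $\mathcal X\times\{-1,+1\}$, with $p:=\mathbb P(Y=+1)\in(0,1)$. A noisy label $\tilde Y\in\{-1,+1\}$ is generated with noise rates $e_{+1}:=\mathbb P(\tilde Y=-1\mid Y=+1)$, $e_{-1}:=\mathbb P(\tilde Y=+1\mid Y=-1)$, where $\tilde Y$ is conditionally independent of $X$ given $Y$; $\tilde{\mathcal D}$ denotes the distribution of $(X,\tilde Y)$. For a distribution $\mathcal P$ of pairs $(X,V)$ on $\mathcal X\times\{-1,+1\}$, the expected peer loss is defined as $$\mathbb E_{\mathcal P}\bigl[\ell_{\mathrm{peer}}(f(X),V)\bigr]:=\mathbb E\bigl[\ell(f(X),V)\bigr]-\mathbb E\bigl[\ell(f(X_1),V_2)\bigr],$$ where $(X,V)$, $(X_1,V_1)$, $(X_2,V_2)$ are i.i.d. draws from $\mathcal P$ (so $X_1$ and $V_2$ are independent, with the marginal laws of $X$ and $V$). *)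

theory Defs
  imports "HOL-Probability.Probability"
begin

text \<open>Labels are encoded as integers in {-1, 1}; the label space is the discrete
measurable space on int.  A distribution of pairs (X, V) is a measure P on
borel \<Otimes> count_space UNIV.\<close>

abbreviation label_space :: "int measure" where
  "label_space \<equiv> count_space UNIV"

text \<open>Expected peer loss: E[l(f X, V)] - E[l(f X1, V2)], where X1 and V2 are
independent with the marginal laws of X and V, i.e. the second expectation is
taken w.r.t. the product of the two marginals of P.\<close>

definition peer_risk ::
  "('x::topological_space \<times> int) measure \<Rightarrow> (real \<Rightarrow> int \<Rightarrow> real) \<Rightarrow> ('x \<Rightarrow> real) \<Rightarrow> real" where
  "peer_risk P l f =
     (\<integral>z. l (f (fst z)) (snd z) \<partial>P)
     - (\<integral>z. l (f (fst z)) (snd z) \<partial>(distr P borel fst \<Otimes>\<^sub>M distr P label_space snd))"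

end

theory Submission
  imports Defs
begin

text \<open>Write \<open>l\<^sub>v = l (f _) v\<close>. Because the second term of the peer loss integrates against the
product of the marginals, the peer risk of a binary label V is the sum over v of the covariances
\<open>Cov (l\<^sub>v X, 1{V = v})\<close>. If W is conditionally independent of X given Y, then
\<open>Cov (u X, 1{W = w}) = (P(W = w | Y = 1) - P(W = w | Y = -1)) Cov (u X, 1{Y = 1})\<close>.
For the noisy label this gap is \<open>1 - e_neg - e_pos\<close> at w = 1 and its negative at w = -1, while
for the clean label Y itself it is 1 and -1; comparing the two sums gives the theorem.\<close>

lemma distr_distr_Pair_fst:
  assumes "X \<in> measurable M N1" and "V \<in> measurable M N2"
  shows "distr (distr M (N1 \<Otimes>\<^sub>M N2) (\<lambda>\<omega>. (X \<omega>, V \<omega>))) N1 fst = distr M N1 X"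
  using assms by (subst distr_distr) (auto intro!: distr_cong)

lemma distr_distr_Pair_snd:
  assumes "X \<in> measurable M N1" and "V \<in> measurable M N2"
  shows "distr (distr M (N1 \<Otimes>\<^sub>M N2) (\<lambda>\<omega>. (X \<omega>, V \<omega>))) N2 snd = distr M N2 V"
  using assms by (subst distr_distr) (auto intro!: distr_cong)

lemma integral_distr_label:
  fixes V :: "'a \<Rightarrow> int" and h :: "int \<Rightarrow> real"
  assumes "finite_measure M" and V[measurable]: "V \<in> measurable M label_space"
    and V_vals: "\<And>\<omega>. \<omega> \<in> space M \<Longrightarrow> V \<omega> \<in> {-1, 1}"
  shows "(\<integral>y. h y \<partial>distr M label_space V)
       = h 1 * measure M {\<omega>\<in>space M. V \<omega> = 1} + h (-1) * measure M {\<omega>\<in>space M. V \<omega> = -1}"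
proof -
  interpret finite_measure M by fact
  have [measurable]: "{\<omega>\<in>space M. V \<omega> = c} \<in> sets M" for c
    by measurable
  have [simp]: "integrable M (indicator {\<omega>\<in>space M. V \<omega> = c} :: 'a \<Rightarrow> real)" for c
    by (intro integrable_real_indicator) (auto simp: less_top[symmetric])
  have "(\<integral>y. h y \<partial>distr M label_space V) = (\<integral>\<omega>. h (V \<omega>) \<partial>M)"
    by (subst integral_distr) auto
  also have "\<dots> = (\<integral>\<omega>. h 1 * indicator {\<omega>\<in>space M. V \<omega> = 1} \<omega>
                      + h (-1) * indicator {\<omega>\<in>space M. V \<omega> = -1} \<omega> \<partial>M)"
    by (rule Bochner_Integration.integral_cong) (auto split: split_indicator dest: V_vals)
  also have "\<dots> = h 1 * measure M {\<omega>\<in>space M. V \<omega> = 1} + h (-1) * measure M {\<omega>\<in>space M. V \<omega> = -1}"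
    by (subst Bochner_Integration.integral_add) auto
  finally show ?thesis .
qed

lemma integral_mult_indicator_split_label:
  fixes u :: "'a \<Rightarrow> real" and V :: "'a \<Rightarrow> int"
  assumes u: "integrable M u" and V[measurable]: "V \<in> measurable M label_space"
    and V_vals: "\<And>\<omega>. \<omega> \<in> space M \<Longrightarrow> V \<omega> \<in> {-1, 1}"
    and P[measurable]: "{\<omega>\<in>space M. P \<omega>} \<in> sets M"
  shows "(\<integral>\<omega>. u \<omega> * indicator {\<omega>\<in>space M. P \<omega>} \<omega> \<partial>M)
       = (\<integral>\<omega>. u \<omega> * indicator {\<omega>\<in>space M. P \<omega> \<and> V \<omega> = 1} \<omega> \<partial>M)
       + (\<integral>\<omega>. u \<omega> * indicator {\<omega>\<in>space M. P \<omega> \<and> V \<omega> = -1} \<omega> \<partial>M)"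
proof -
  have [measurable]: "{\<omega>\<in>space M. P \<omega> \<and> V \<omega> = c} \<in> sets M" for c
    using P by measurable
  have "(\<integral>\<omega>. u \<omega> * indicator {\<omega>\<in>space M. P \<omega>} \<omega> \<partial>M)
      = (\<integral>\<omega>. u \<omega> * indicator {\<omega>\<in>space M. P \<omega> \<and> V \<omega> = 1} \<omega>
          + u \<omega> * indicator {\<omega>\<in>space M. P \<omega> \<and> V \<omega> = -1} \<omega> \<partial>M)"
    by (rule Bochner_Integration.integral_cong) (auto split: split_indicator dest: V_vals)
  also have "\<dots> = (\<integral>\<omega>. u \<omega> * indicator {\<omega>\<in>space M. P \<omega> \<and> V \<omega> = 1} \<omega> \<partial>M)
       + (\<integral>\<omega>. u \<omega> * indicator {\<omega>\<in>space M. P \<omega> \<and> V \<omega> = -1} \<omega> \<partial>M)"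
    using u by (intro Bochner_Integration.integral_add integrable_real_mult_indicator) auto
  finally show ?thesis .
qed

lemma integral_split_label:
  fixes u :: "'a \<Rightarrow> real" and V :: "'a \<Rightarrow> int"
  assumes u: "integrable M u" and V: "V \<in> measurable M label_space"
    and V_vals: "\<And>\<omega>. \<omega> \<in> space M \<Longrightarrow> V \<omega> \<in> {-1, 1}"
  shows "(\<integral>\<omega>. u \<omega> \<partial>M)
       = (\<integral>\<omega>. u \<omega> * indicator {\<omega>\<in>space M. V \<omega> = 1} \<omega> \<partial>M)
       + (\<integral>\<omega>. u \<omega> * indicator {\<omega>\<in>space M. V \<omega> = -1} \<omega> \<partial>M)"
proof -
  have "(\<integral>\<omega>. u \<omega> \<partial>M) = (\<integral>\<omega>. u \<omega> * indicator (space M) \<omega> \<partial>M)"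
    by (rule Bochner_Integration.integral_cong) auto
  then show ?thesis
    using integral_mult_indicator_split_label[OF u V V_vals, of "\<lambda>_. True"] by simp
qed

lemma measure_split_label:
  fixes V :: "'a \<Rightarrow> int"
  assumes "finite_measure M" and V[measurable]: "V \<in> measurable M label_space"
    and V_vals: "\<And>\<omega>. \<omega> \<in> space M \<Longrightarrow> V \<omega> \<in> {-1, 1}"
    and P[measurable]: "{\<omega>\<in>space M. P \<omega>} \<in> sets M"
  shows "measure M {\<omega>\<in>space M. P \<omega>}
       = measure M {\<omega>\<in>space M. P \<omega> \<and> V \<omega> = 1} + measure M {\<omega>\<in>space M. P \<omega> \<and> V \<omega> = -1}"
proof -
  interpret finite_measure M by fact
  have [measurable]: "{\<omega>\<in>space M. P \<omega> \<and> V \<omega> = c} \<in> sets M" for c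
    using P by measurable
  have "{\<omega>\<in>space M. P \<omega>} = {\<omega>\<in>space M. P \<omega> \<and> V \<omega> = 1} \<union> {\<omega>\<in>space M. P \<omega> \<and> V \<omega> = -1}"
    using V_vals by auto
  then show ?thesis
    by (simp add: finite_measure_Union) (subst finite_measure_Union; auto)
qed

lemma prob_label_neg:
  fixes V :: "'a \<Rightarrow> int"
  assumes "prob_space M" and V: "V \<in> measurable M label_space"
    and V_vals: "\<And>\<omega>. \<omega> \<in> space M \<Longrightarrow> V \<omega> \<in> {-1, 1}"
  shows "measure M {\<omega>\<in>space M. V \<omega> = -1} = 1 - measure M {\<omega>\<in>space M. V \<omega> = 1}"
proof -
  interpret prob_space M by fact
  show ?thesis
    using measure_split_label[OF finite_measure_axioms V V_vals, of "\<lambda>_. True"] by (simp add: prob_space)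
qed

lemma integrable_slice_pair_measure:
  fixes g :: "'a \<times> 'b \<Rightarrow> real"
  assumes "sigma_finite_measure M1" and "finite_measure M2"
    and g: "integrable (M1 \<Otimes>\<^sub>M M2) g"
    and v: "{v} \<in> sets M2" and pos: "measure M2 {v} \<noteq> 0"
  shows "integrable M1 (\<lambda>x. g (x, v))"
proof -
  interpret M2: finite_measure M2 by fact
  interpret pair_sigma_finite M1 M2
    using assms(1) M2.sigma_finite_measure_axioms by (rule pair_sigma_finite.intro)
  have "integrable (M1 \<Otimes>\<^sub>M M2) (\<lambda>z. g z * indicator (space M1 \<times> {v}) z)"
    using g v by (intro integrable_real_mult_indicator) auto
  then have slice: "integrable M1 (\<lambda>x. \<integral>y. g (x, y) * indicator (space M1 \<times> {v}) (x, y) \<partial>M2)"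
    by (rule integrable_fst')
  have inner: "(\<integral>y. g (x, y) * indicator (space M1 \<times> {v}) (x, y) \<partial>M2) = measure M2 {v} * g (x, v)"
    if "x \<in> space M1" for x
  proof -
    have "(\<integral>y. g (x, y) * indicator (space M1 \<times> {v}) (x, y) \<partial>M2) = (\<integral>y. g (x, v) * indicator {v} y \<partial>M2)"
      using that by (intro Bochner_Integration.integral_cong) (auto split: split_indicator)
    then show ?thesis
      using v sets.sets_into_space[OF v] by (simp add: Int_absorb2)
  qed
  have "integrable M1 (\<lambda>x. measure M2 {v} * g (x, v))"
    using slice by (subst (asm) Bochner_Integration.integrable_cong[OF refl inner]) simp
  then show ?thesis
    using pos by simp
qed

lemma integrable_comp_slice_marginals:
  fixes X :: "'a \<Rightarrow> 'b" and V :: "'a \<Rightarrow> int" and g :: "'b \<times> int \<Rightarrow> real"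
  assumes "prob_space M" and X[measurable]: "X \<in> measurable M N"
    and V[measurable]: "V \<in> measurable M label_space"
    and g: "integrable (distr M N X \<Otimes>\<^sub>M distr M label_space V) g"
    and pos: "0 < measure M {\<omega>\<in>space M. V \<omega> = v}"
  shows "integrable M (\<lambda>\<omega>. g (X \<omega>, v))"
proof -
  interpret prob_space M by fact
  have "measure (distr M label_space V) {v} = measure M {\<omega>\<in>space M. V \<omega> = v}"
    by (simp add: measure_distr vimage_def Collect_conj_eq Int_commute)
  moreover have "sigma_finite_measure (distr M N X)"
    by (rule prob_space_imp_sigma_finite, rule prob_space_distr) simp
  moreover have "finite_measure (distr M label_space V)"
    by (rule finite_measure_distr) simp
  ultimately have "integrable (distr M N X) (\<lambda>x. g (x, v))"
    using g pos by (intro integrable_slice_pair_measure) auto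
  moreover have "(\<lambda>x. g (x, v)) \<in> borel_measurable N"
    using borel_measurable_integrable[OF calculation] by simp
  ultimately show ?thesis
    by (simp add: integrable_distr_eq)
qed

lemma integral_distr_Pair_label:
  fixes X :: "'a \<Rightarrow> 'b" and V :: "'a \<Rightarrow> int" and g :: "'b \<times> int \<Rightarrow> real"
  assumes X[measurable]: "X \<in> measurable M N" and V[measurable]: "V \<in> measurable M label_space"
    and V_vals: "\<And>\<omega>. \<omega> \<in> space M \<Longrightarrow> V \<omega> \<in> {-1, 1}"
    and g[measurable]: "g \<in> borel_measurable (N \<Otimes>\<^sub>M label_space)"
    and int_pos: "integrable M (\<lambda>\<omega>. g (X \<omega>, 1))" and int_neg: "integrable M (\<lambda>\<omega>. g (X \<omega>, -1))"
  shows "(\<integral>z. g z \<partial>distr M (N \<Otimes>\<^sub>M label_space) (\<lambda>\<omega>. (X \<omega>, V \<omega>)))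
       = (\<integral>\<omega>. g (X \<omega>, 1) * indicator {\<omega>\<in>space M. V \<omega> = 1} \<omega> \<partial>M)
       + (\<integral>\<omega>. g (X \<omega>, -1) * indicator {\<omega>\<in>space M. V \<omega> = -1} \<omega> \<partial>M)"
proof -
  have [measurable]: "{\<omega>\<in>space M. V \<omega> = c} \<in> sets M" for c
    by measurable
  have "(\<integral>z. g z \<partial>distr M (N \<Otimes>\<^sub>M label_space) (\<lambda>\<omega>. (X \<omega>, V \<omega>)))
      = (\<integral>\<omega>. g (X \<omega>, 1) * indicator {\<omega>\<in>space M. V \<omega> = 1} \<omega>
          + g (X \<omega>, -1) * indicator {\<omega>\<in>space M. V \<omega> = -1} \<omega> \<partial>M)"
    by (subst integral_distr)
       (auto intro!: Bochner_Integration.integral_cong split: split_indicator dest: V_vals)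
  also have "\<dots> = (\<integral>\<omega>. g (X \<omega>, 1) * indicator {\<omega>\<in>space M. V \<omega> = 1} \<omega> \<partial>M)
      + (\<integral>\<omega>. g (X \<omega>, -1) * indicator {\<omega>\<in>space M. V \<omega> = -1} \<omega> \<partial>M)"
    using int_pos int_neg by (intro Bochner_Integration.integral_add integrable_real_mult_indicator) auto
  finally show ?thesis .
qed

lemma integral_marginals_label:
  fixes X :: "'a \<Rightarrow> 'b" and V :: "'a \<Rightarrow> int" and g :: "'b \<times> int \<Rightarrow> real"
  assumes "prob_space M" and X[measurable]: "X \<in> measurable M N"
    and V[measurable]: "V \<in> measurable M label_space"
    and V_vals: "\<And>\<omega>. \<omega> \<in> space M \<Longrightarrow> V \<omega> \<in> {-1, 1}"
    and g: "integrable (distr M N X \<Otimes>\<^sub>M distr M label_space V) g"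
    and int_pos: "integrable M (\<lambda>\<omega>. g (X \<omega>, 1))" and int_neg: "integrable M (\<lambda>\<omega>. g (X \<omega>, -1))"
  shows "(\<integral>z. g z \<partial>(distr M N X \<Otimes>\<^sub>M distr M label_space V))
       = (\<integral>\<omega>. g (X \<omega>, 1) \<partial>M) * measure M {\<omega>\<in>space M. V \<omega> = 1}
       + (\<integral>\<omega>. g (X \<omega>, -1) \<partial>M) * measure M {\<omega>\<in>space M. V \<omega> = -1}"
proof -
  interpret prob_space M by fact
  note finite_M = finite_measure_axioms
  interpret PX: prob_space "distr M N X"
    by (rule prob_space_distr) simp
  interpret PV: prob_space "distr M label_space V"
    by (rule prob_space_distr) simp
  interpret pair_prob_space "distr M N X" "distr M label_space V" ..
  have [measurable]: "(\<lambda>x. g (x, v)) \<in> borel_measurable N" for v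
    using measurable_compose[OF measurable_Pair2' borel_measurable_integrable[OF g], of v] by simp
  have "(\<integral>z. g z \<partial>(distr M N X \<Otimes>\<^sub>M distr M label_space V))
      = (\<integral>x. \<integral>y. g (x, y) \<partial>distr M label_space V \<partial>distr M N X)"
    using integral_fst'[OF g] by simp
  also have "\<dots> = (\<integral>x. g (x, 1) * measure M {\<omega>\<in>space M. V \<omega> = 1}
                      + g (x, -1) * measure M {\<omega>\<in>space M. V \<omega> = -1} \<partial>distr M N X)"
    by (simp add: integral_distr_label[OF finite_M V V_vals])
  also have "\<dots> = (\<integral>\<omega>. g (X \<omega>, 1) \<partial>M) * measure M {\<omega>\<in>space M. V \<omega> = 1}
                  + (\<integral>\<omega>. g (X \<omega>, -1) \<partial>M) * measure M {\<omega>\<in>space M. V \<omega> = -1}"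
    using int_pos int_neg by (subst integral_distr) auto
  finally show ?thesis .
qed

lemma integral_mult_indicator_eq_of_restricted_laws:
  fixes X :: "'a \<Rightarrow> 'b" and u :: "'b \<Rightarrow> real"
  assumes "finite_measure M" and X[measurable]: "X \<in> measurable M N"
    and S[measurable]: "S \<in> sets M" and T[measurable]: "T \<in> sets M"
    and q: "0 \<le> q" and r: "0 \<le> r"
    and laws: "\<And>A. A \<in> sets N \<Longrightarrow> measure M (X -` A \<inter> S) * q = measure M (X -` A \<inter> T) * r"
    and u[measurable]: "u \<in> borel_measurable N"
  shows "(\<integral>\<omega>. u (X \<omega>) * indicator S \<omega> \<partial>M) * q = (\<integral>\<omega>. u (X \<omega>) * indicator T \<omega> \<partial>M) * r"
proof -
  interpret finite_measure M by fact
  define law where "law R c = distr (density M (\<lambda>\<omega>. ennreal (c * indicator R \<omega>))) N X" for R c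
  have emeasure_law: "emeasure (law R c) A = ennreal (measure M (X -` A \<inter> R) * c)"
    if "A \<in> sets N" "R \<in> sets M" "0 \<le> c" for A R c
  proof -
    have "X -` A \<inter> R = (X -` A \<inter> space M) \<inter> R"
      using sets.sets_into_space[OF \<open>R \<in> sets M\<close>] by blast
    then have XAR: "X -` A \<inter> R \<in> sets M"
      using that by simp
    have "emeasure (law R c) A = (\<integral>\<^sup>+\<omega>. ennreal (c * indicator R \<omega>) * indicator (X -` A \<inter> space M) \<omega> \<partial>M)"
      using that by (simp add: law_def emeasure_distr emeasure_density)
    also have "\<dots> = (\<integral>\<^sup>+\<omega>. ennreal c * indicator (X -` A \<inter> R) \<omega> \<partial>M)"
      using that sets.sets_into_space[OF \<open>R \<in> sets M\<close>]
      by (intro nn_integral_cong) (auto split: split_indicator)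
    also have "\<dots> = ennreal (measure M (X -` A \<inter> R) * c)"
      using that XAR by (simp add: nn_integral_cmult_indicator emeasure_eq_measure ennreal_mult mult.commute)
    finally show ?thesis .
  qed
  have integral_law: "(\<integral>x. u x \<partial>law R c) = (\<integral>\<omega>. u (X \<omega>) * indicator R \<omega> \<partial>M) * c"
    if "R \<in> sets M" "0 \<le> c" for R c
    using that by (simp add: law_def integral_distr integral_density mult_ac)
  have sets_law[simp]: "sets (law R c) = sets N" for R c
    by (simp add: law_def)
  have "law S q = law T r"
    by (rule measure_eqI) (simp_all add: emeasure_law laws q r)
  then show ?thesis
    using integral_law[OF S q] integral_law[OF T r] by simp
qed

lemma integral_indicator_cond_indep:
  fixes X :: "'a \<Rightarrow> 'b" and Y W :: "'a \<Rightarrow> int" and u :: "'b \<Rightarrow> real"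
  assumes "finite_measure M" and X[measurable]: "X \<in> measurable M N"
    and Y[measurable]: "Y \<in> measurable M label_space"
    and W[measurable]: "W \<in> measurable M label_space"
    and Y_vals: "\<And>\<omega>. \<omega> \<in> space M \<Longrightarrow> Y \<omega> \<in> {-1, 1}"
    and pos: "\<And>c. c \<in> {-1, 1} \<Longrightarrow> 0 < measure M {\<omega>\<in>space M. Y \<omega> = c}"
    and cond_indep: "\<And>A c. A \<in> sets N \<Longrightarrow>
          measure M {\<omega>\<in>space M. X \<omega> \<in> A \<and> W \<omega> = w \<and> Y \<omega> = c} * measure M {\<omega>\<in>space M. Y \<omega> = c}
          = measure M {\<omega>\<in>space M. X \<omega> \<in> A \<and> Y \<omega> = c} * measure M {\<omega>\<in>space M. W \<omega> = w \<and> Y \<omega> = c}"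
    and u[measurable]: "u \<in> borel_measurable N" and int_u: "integrable M (\<lambda>\<omega>. u (X \<omega>))"
  shows "(\<integral>\<omega>. u (X \<omega>) * indicator {\<omega>\<in>space M. W \<omega> = w} \<omega> \<partial>M)
       = (\<Sum>c\<in>{-1, 1}. (\<integral>\<omega>. u (X \<omega>) * indicator {\<omega>\<in>space M. Y \<omega> = c} \<omega> \<partial>M)
            * measure M {\<omega>\<in>space M. W \<omega> = w \<and> Y \<omega> = c} / measure M {\<omega>\<in>space M. Y \<omega> = c})"
proof -
  have restricted: "(\<integral>\<omega>. u (X \<omega>) * indicator {\<omega>\<in>space M. W \<omega> = w \<and> Y \<omega> = c} \<omega> \<partial>M)
      * measure M {\<omega>\<in>space M. Y \<omega> = c}
    = (\<integral>\<omega>. u (X \<omega>) * indicator {\<omega>\<in>space M. Y \<omega> = c} \<omega> \<partial>M)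
      * measure M {\<omega>\<in>space M. W \<omega> = w \<and> Y \<omega> = c}" for c
  proof (rule integral_mult_indicator_eq_of_restricted_laws[OF assms(1) X])
    fix S assume "S \<in> sets N"
    moreover have "X -` S \<inter> {\<omega>\<in>space M. Q \<omega>} = {\<omega>\<in>space M. X \<omega> \<in> S \<and> Q \<omega>}" for Q
      by blast
    ultimately show "measure M (X -` S \<inter> {\<omega>\<in>space M. W \<omega> = w \<and> Y \<omega> = c}) * measure M {\<omega>\<in>space M. Y \<omega> = c}
        = measure M (X -` S \<inter> {\<omega>\<in>space M. Y \<omega> = c}) * measure M {\<omega>\<in>space M. W \<omega> = w \<and> Y \<omega> = c}"
      using cond_indep by simp
  qed simp_all
  have "(\<integral>\<omega>. u (X \<omega>) * indicator {\<omega>\<in>space M. W \<omega> = w} \<omega> \<partial>M)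
      = (\<integral>\<omega>. u (X \<omega>) * indicator {\<omega>\<in>space M. W \<omega> = w \<and> Y \<omega> = 1} \<omega> \<partial>M)
      + (\<integral>\<omega>. u (X \<omega>) * indicator {\<omega>\<in>space M. W \<omega> = w \<and> Y \<omega> = -1} \<omega> \<partial>M)"
    by (rule integral_mult_indicator_split_label[OF int_u Y Y_vals]) measurable
  then show ?thesis
    using restricted[of 1] restricted[of "-1"] pos[of 1] pos[of "-1"] by (simp add: field_simps)
qed

definition label_cov :: "'a measure \<Rightarrow> ('a \<Rightarrow> real) \<Rightarrow> ('a \<Rightarrow> int) \<Rightarrow> int \<Rightarrow> real" where
  "label_cov M u V v =
     (\<integral>\<omega>. u \<omega> * indicator {\<omega>\<in>space M. V \<omega> = v} \<omega> \<partial>M)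
     - (\<integral>\<omega>. u \<omega> \<partial>M) * measure M {\<omega>\<in>space M. V \<omega> = v}"

lemma label_cov_label_one:
  fixes u :: "'a \<Rightarrow> real" and Y :: "'a \<Rightarrow> int"
  assumes "prob_space M" and u: "integrable M u" and Y: "Y \<in> measurable M label_space"
    and Y_vals: "\<And>\<omega>. \<omega> \<in> space M \<Longrightarrow> Y \<omega> \<in> {-1, 1}"
  shows "label_cov M u Y 1
       = (\<integral>\<omega>. u \<omega> * indicator {\<omega>\<in>space M. Y \<omega> = 1} \<omega> \<partial>M) * measure M {\<omega>\<in>space M. Y \<omega> = -1}
       - (\<integral>\<omega>. u \<omega> * indicator {\<omega>\<in>space M. Y \<omega> = -1} \<omega> \<partial>M) * measure M {\<omega>\<in>space M. Y \<omega> = 1}"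
proof -
  have "label_cov M u Y 1
      = (\<integral>\<omega>. u \<omega> * indicator {\<omega>\<in>space M. Y \<omega> = 1} \<omega> \<partial>M)
        - ((\<integral>\<omega>. u \<omega> * indicator {\<omega>\<in>space M. Y \<omega> = 1} \<omega> \<partial>M)
           + (\<integral>\<omega>. u \<omega> * indicator {\<omega>\<in>space M. Y \<omega> = -1} \<omega> \<partial>M)) * measure M {\<omega>\<in>space M. Y \<omega> = 1}"
    unfolding label_cov_def using integral_split_label[OF u Y Y_vals] by simp
  then show ?thesis
    by (simp add: prob_label_neg[OF assms(1) Y Y_vals] algebra_simps)
qed

definition cond_prob_gap :: "'a measure \<Rightarrow> ('a \<Rightarrow> int) \<Rightarrow> int \<Rightarrow> ('a \<Rightarrow> int) \<Rightarrow> real" where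
  "cond_prob_gap M W w Y =
     measure M {\<omega>\<in>space M. W \<omega> = w \<and> Y \<omega> = 1} / measure M {\<omega>\<in>space M. Y \<omega> = 1}
     - measure M {\<omega>\<in>space M. W \<omega> = w \<and> Y \<omega> = -1} / measure M {\<omega>\<in>space M. Y \<omega> = -1}"

lemma label_cov_cond_indep:
  fixes X :: "'a \<Rightarrow> 'b" and Y W :: "'a \<Rightarrow> int" and u :: "'b \<Rightarrow> real"
  assumes M: "prob_space M" and X: "X \<in> measurable M N"
    and Y[measurable]: "Y \<in> measurable M label_space"
    and W[measurable]: "W \<in> measurable M label_space"
    and Y_vals: "\<And>\<omega>. \<omega> \<in> space M \<Longrightarrow> Y \<omega> \<in> {-1, 1}"
    and pos: "\<And>c. c \<in> {-1, 1} \<Longrightarrow> 0 < measure M {\<omega>\<in>space M. Y \<omega> = c}"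
    and cond_indep: "\<And>A c. A \<in> sets N \<Longrightarrow>
          measure M {\<omega>\<in>space M. X \<omega> \<in> A \<and> W \<omega> = w \<and> Y \<omega> = c} * measure M {\<omega>\<in>space M. Y \<omega> = c}
          = measure M {\<omega>\<in>space M. X \<omega> \<in> A \<and> Y \<omega> = c} * measure M {\<omega>\<in>space M. W \<omega> = w \<and> Y \<omega> = c}"
    and u: "u \<in> borel_measurable N" and int_u: "integrable M (\<lambda>\<omega>. u (X \<omega>))"
  shows "label_cov M (\<lambda>\<omega>. u (X \<omega>)) W w = cond_prob_gap M W w Y * label_cov M (\<lambda>\<omega>. u (X \<omega>)) Y 1"
proof -
  interpret prob_space M by fact
  define \<pi> where "\<pi> = measure M {\<omega>\<in>space M. Y \<omega> = 1}"
  define r where "r c = measure M {\<omega>\<in>space M. W \<omega> = w \<and> Y \<omega> = c}" for c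
  define A where "A c = (\<integral>\<omega>. u (X \<omega>) * indicator {\<omega>\<in>space M. Y \<omega> = c} \<omega> \<partial>M)" for c
  have \<pi>_neg: "measure M {\<omega>\<in>space M. Y \<omega> = -1} = 1 - \<pi>"
    unfolding \<pi>_def by (rule prob_label_neg[OF M Y Y_vals])
  have \<pi>: "0 < \<pi>" "0 < 1 - \<pi>"
    using pos[of 1] pos[of "-1"] by (simp_all add: \<pi>_def \<pi>_neg)
  have "measure M {\<omega>\<in>space M. W \<omega> = w} = r 1 + r (-1)"
    unfolding r_def by (rule measure_split_label[OF finite_measure_axioms Y Y_vals]) measurable
  moreover have "(\<integral>\<omega>. u (X \<omega>) * indicator {\<omega>\<in>space M. W \<omega> = w} \<omega> \<partial>M)
      = A 1 * r 1 / \<pi> + A (-1) * r (-1) / (1 - \<pi>)"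
    using integral_indicator_cond_indep[OF finite_measure_axioms X Y W Y_vals pos cond_indep u int_u]
    by (simp add: A_def r_def \<pi>_def \<pi>_neg)
  moreover have "(\<integral>\<omega>. u (X \<omega>) \<partial>M) = A 1 + A (-1)"
    using integral_split_label[OF int_u Y Y_vals] by (simp add: A_def)
  ultimately have "label_cov M (\<lambda>\<omega>. u (X \<omega>)) W w
      = A 1 * r 1 / \<pi> + A (-1) * r (-1) / (1 - \<pi>) - (A 1 + A (-1)) * (r 1 + r (-1))"
    unfolding label_cov_def by simp
  also have "\<dots> = (r 1 / \<pi> - r (-1) / (1 - \<pi>)) * (A 1 * (1 - \<pi>) - A (-1) * \<pi>)"
    using \<pi> by (simp add: field_simps)
  also have "\<dots> = cond_prob_gap M W w Y * label_cov M (\<lambda>\<omega>. u (X \<omega>)) Y 1"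
    using label_cov_label_one[OF M int_u Y Y_vals]
    unfolding cond_prob_gap_def by (simp add: A_def r_def \<pi>_def \<pi>_neg)
  finally show ?thesis .
qed

lemma cond_prob_gap_binary:
  fixes Y W :: "'a \<Rightarrow> int"
  assumes "finite_measure M"
    and Y[measurable]: "Y \<in> measurable M label_space" and W: "W \<in> measurable M label_space"
    and W_vals: "\<And>\<omega>. \<omega> \<in> space M \<Longrightarrow> W \<omega> \<in> {-1, 1}"
    and pos: "\<And>c. c \<in> {-1, 1} \<Longrightarrow> 0 < measure M {\<omega>\<in>space M. Y \<omega> = c}"
  shows "cond_prob_gap M W 1 Y
       = 1 - measure M {\<omega>\<in>space M. W \<omega> = -1 \<and> Y \<omega> = 1} / measure M {\<omega>\<in>space M. Y \<omega> = 1}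
           - measure M {\<omega>\<in>space M. W \<omega> = 1 \<and> Y \<omega> = -1} / measure M {\<omega>\<in>space M. Y \<omega> = -1}"
    and "cond_prob_gap M W (-1) Y = - cond_prob_gap M W 1 Y"
proof -
  have joint: "measure M {\<omega>\<in>space M. W \<omega> = -1 \<and> Y \<omega> = c}
      = measure M {\<omega>\<in>space M. Y \<omega> = c} - measure M {\<omega>\<in>space M. W \<omega> = 1 \<and> Y \<omega> = c}" for c
  proof -
    have "{\<omega>\<in>space M. Y \<omega> = c \<and> W \<omega> = b} = {\<omega>\<in>space M. W \<omega> = b \<and> Y \<omega> = c}" for b
      by blast
    moreover have "{\<omega>\<in>space M. Y \<omega> = c} \<in> sets M"
      by measurable
    ultimately show ?thesis
      using measure_split_label[OF assms(1) W W_vals, of "\<lambda>\<omega>. Y \<omega> = c"] by simp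
  qed
  show "cond_prob_gap M W 1 Y
       = 1 - measure M {\<omega>\<in>space M. W \<omega> = -1 \<and> Y \<omega> = 1} / measure M {\<omega>\<in>space M. Y \<omega> = 1}
           - measure M {\<omega>\<in>space M. W \<omega> = 1 \<and> Y \<omega> = -1} / measure M {\<omega>\<in>space M. Y \<omega> = -1}"
    using pos[of 1] unfolding cond_prob_gap_def by (simp add: joint field_simps)
  show "cond_prob_gap M W (-1) Y = - cond_prob_gap M W 1 Y"
    using pos[of 1] pos[of "-1"] unfolding cond_prob_gap_def by (simp add: joint field_simps)
qed

lemma peer_risk_eq_label_cov:
  fixes M :: "'a measure" and X :: "'a \<Rightarrow> 'x::topological_space" and V :: "'a \<Rightarrow> int"
    and f :: "'x \<Rightarrow> real" and l :: "real \<Rightarrow> int \<Rightarrow> real"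
  assumes M: "prob_space M" and X: "X \<in> measurable M borel"
    and V: "V \<in> measurable M label_space"
    and V_vals: "\<And>\<omega>. \<omega> \<in> space M \<Longrightarrow> V \<omega> \<in> {-1, 1}"
    and g: "(\<lambda>z. l (f (fst z)) (snd z)) \<in> borel_measurable (borel \<Otimes>\<^sub>M label_space)"
    and int_prod: "integrable (distr M borel X \<Otimes>\<^sub>M distr M label_space V) (\<lambda>z. l (f (fst z)) (snd z))"
    and int_pos: "integrable M (\<lambda>\<omega>. l (f (X \<omega>)) 1)"
    and int_neg: "integrable M (\<lambda>\<omega>. l (f (X \<omega>)) (-1))"
  shows "peer_risk (distr M (borel \<Otimes>\<^sub>M label_space) (\<lambda>\<omega>. (X \<omega>, V \<omega>))) l f
       = label_cov M (\<lambda>\<omega>. l (f (X \<omega>)) 1) V 1 + label_cov M (\<lambda>\<omega>. l (f (X \<omega>)) (-1)) V (-1)"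
  using integral_distr_Pair_label[OF X V V_vals g] integral_marginals_label[OF M X V V_vals int_prod]
    int_pos int_neg
  unfolding peer_risk_def label_cov_def distr_distr_Pair_fst[OF X V] distr_distr_Pair_snd[OF X V]
  by simp

lemma measurable_loss_slice:
  assumes "(\<lambda>z. l (f (fst z)) (snd z)) \<in> borel_measurable (N \<Otimes>\<^sub>M label_space)"
  shows "(\<lambda>x. l (f x) v) \<in> borel_measurable N"
  using measurable_compose[OF measurable_Pair2' assms, of v] by simp

lemma peer_risk_cond_indep:
  fixes M :: "'a measure" and X :: "'a \<Rightarrow> 'x::topological_space" and Y W :: "'a \<Rightarrow> int"
    and f :: "'x \<Rightarrow> real" and l :: "real \<Rightarrow> int \<Rightarrow> real"
  assumes M: "prob_space M" and X: "X \<in> measurable M borel"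
    and Y: "Y \<in> measurable M label_space" and W: "W \<in> measurable M label_space"
    and Y_vals: "\<And>\<omega>. \<omega> \<in> space M \<Longrightarrow> Y \<omega> \<in> {-1, 1}"
    and W_vals: "\<And>\<omega>. \<omega> \<in> space M \<Longrightarrow> W \<omega> \<in> {-1, 1}"
    and pos: "\<And>c. c \<in> {-1, 1} \<Longrightarrow> 0 < measure M {\<omega>\<in>space M. Y \<omega> = c}"
    and cond_indep: "\<And>A b c. A \<in> sets borel \<Longrightarrow>
          measure M {\<omega>\<in>space M. X \<omega> \<in> A \<and> W \<omega> = b \<and> Y \<omega> = c} * measure M {\<omega>\<in>space M. Y \<omega> = c}
          = measure M {\<omega>\<in>space M. X \<omega> \<in> A \<and> Y \<omega> = c} * measure M {\<omega>\<in>space M. W \<omega> = b \<and> Y \<omega> = c}"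
    and g: "(\<lambda>z. l (f (fst z)) (snd z)) \<in> borel_measurable (borel \<Otimes>\<^sub>M label_space)"
    and int_prod: "integrable (distr M borel X \<Otimes>\<^sub>M distr M label_space W) (\<lambda>z. l (f (fst z)) (snd z))"
    and int_pos: "integrable M (\<lambda>\<omega>. l (f (X \<omega>)) 1)"
    and int_neg: "integrable M (\<lambda>\<omega>. l (f (X \<omega>)) (-1))"
  shows "peer_risk (distr M (borel \<Otimes>\<^sub>M label_space) (\<lambda>\<omega>. (X \<omega>, W \<omega>))) l f
       = cond_prob_gap M W 1 Y
         * (label_cov M (\<lambda>\<omega>. l (f (X \<omega>)) 1) Y 1 - label_cov M (\<lambda>\<omega>. l (f (X \<omega>)) (-1)) Y 1)"
proof -
  have cov: "label_cov M (\<lambda>\<omega>. l (f (X \<omega>)) v) W w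
      = cond_prob_gap M W w Y * label_cov M (\<lambda>\<omega>. l (f (X \<omega>)) v) Y 1"
    if "integrable M (\<lambda>\<omega>. l (f (X \<omega>)) v)" for v w
    by (rule label_cov_cond_indep[OF M X Y W Y_vals pos cond_indep
          measurable_loss_slice[where l = l and f = f, OF g] that])
  have "cond_prob_gap M W (-1) Y = - cond_prob_gap M W 1 Y"
    by (rule cond_prob_gap_binary(2)[OF prob_space.finite_measure[OF M] Y W W_vals pos])
  moreover have "peer_risk (distr M (borel \<Otimes>\<^sub>M label_space) (\<lambda>\<omega>. (X \<omega>, W \<omega>))) l f
      = label_cov M (\<lambda>\<omega>. l (f (X \<omega>)) 1) W 1 + label_cov M (\<lambda>\<omega>. l (f (X \<omega>)) (-1)) W (-1)"
    by (rule peer_risk_eq_label_cov[OF M X W W_vals g int_prod int_pos int_neg])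
  ultimately show ?thesis
    unfolding cov[OF int_pos] cov[OF int_neg] by (simp add: algebra_simps)
qed

theorem lemma2:
  fixes M :: "'a measure"
    and X :: "'a \<Rightarrow> real ^ 'd"
    and Y Yt :: "'a \<Rightarrow> int"
    and f :: "real ^ 'd \<Rightarrow> real"
    and l :: "real \<Rightarrow> int \<Rightarrow> real"
    and p e_pos e_neg :: real
  assumes M: "prob_space M"
    and X_meas: "X \<in> measurable M borel"
    and Y_meas: "Y \<in> measurable M label_space"
    and Yt_meas: "Yt \<in> measurable M label_space"
    and Y_vals: "\<And>\<omega>. \<omega> \<in> space M \<Longrightarrow> Y \<omega> \<in> {-1, 1}"
    and Yt_vals: "\<And>\<omega>. \<omega> \<in> space M \<Longrightarrow> Yt \<omega> \<in> {-1, 1}"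
    and p_def: "p = measure M {\<omega> \<in> space M. Y \<omega> = 1}"
    and p_pos: "0 < p" and p_lt1: "p < 1"
    and e_pos_def: "e_pos = measure M {\<omega> \<in> space M. Yt \<omega> = -1 \<and> Y \<omega> = 1}
                             / measure M {\<omega> \<in> space M. Y \<omega> = 1}"
    and e_neg_def: "e_neg = measure M {\<omega> \<in> space M. Yt \<omega> = 1 \<and> Y \<omega> = -1}
                             / measure M {\<omega> \<in> space M. Y \<omega> = -1}"
    and cond_indep: "\<And>A b c. A \<in> sets borel \<Longrightarrow>
          measure M {\<omega> \<in> space M. X \<omega> \<in> A \<and> Yt \<omega> = b \<and> Y \<omega> = c}
            * measure M {\<omega> \<in> space M. Y \<omega> = c}
          = measure M {\<omega> \<in> space M. X \<omega> \<in> A \<and> Y \<omega> = c}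
            * measure M {\<omega> \<in> space M. Yt \<omega> = b \<and> Y \<omega> = c}"
    and f_meas: "f \<in> borel_measurable borel"
    and l_nonneg: "\<And>t y. y \<in> {-1, 1} \<Longrightarrow> 0 \<le> l t y"
    and int_D: "integrable (distr M (borel \<Otimes>\<^sub>M label_space) (\<lambda>\<omega>. (X \<omega>, Y \<omega>)))
                  (\<lambda>z. l (f (fst z)) (snd z))"
    and int_D_prod: "integrable
                  (distr (distr M (borel \<Otimes>\<^sub>M label_space) (\<lambda>\<omega>. (X \<omega>, Y \<omega>))) borel fst
                   \<Otimes>\<^sub>M distr (distr M (borel \<Otimes>\<^sub>M label_space) (\<lambda>\<omega>. (X \<omega>, Y \<omega>))) label_space snd)
                  (\<lambda>z. l (f (fst z)) (snd z))"
    and int_Dt: "integrable (distr M (borel \<Otimes>\<^sub>M label_space) (\<lambda>\<omega>. (X \<omega>, Yt \<omega>)))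
                  (\<lambda>z. l (f (fst z)) (snd z))"
    and int_Dt_prod: "integrable
                  (distr (distr M (borel \<Otimes>\<^sub>M label_space) (\<lambda>\<omega>. (X \<omega>, Yt \<omega>))) borel fst
                   \<Otimes>\<^sub>M distr (distr M (borel \<Otimes>\<^sub>M label_space) (\<lambda>\<omega>. (X \<omega>, Yt \<omega>))) label_space snd)
                  (\<lambda>z. l (f (fst z)) (snd z))"
  shows "peer_risk (distr M (borel \<Otimes>\<^sub>M label_space) (\<lambda>\<omega>. (X \<omega>, Yt \<omega>))) l f
         = (1 - e_neg - e_pos) * peer_risk (distr M (borel \<Otimes>\<^sub>M label_space) (\<lambda>\<omega>. (X \<omega>, Y \<omega>))) l f"
proof -
  interpret prob_space M by fact
  note [measurable] = X_meas Y_meas Yt_meas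
  have g: "(\<lambda>z. l (f (fst z)) (snd z)) \<in> borel_measurable (borel \<Otimes>\<^sub>M label_space)"
    using borel_measurable_integrable[OF int_D] by simp
  have pos: "0 < measure M {\<omega>\<in>space M. Y \<omega> = c}" if "c \<in> {-1, 1}" for c
    using that p_pos p_lt1 prob_label_neg[OF M Y_meas Y_vals] by (auto simp: p_def)
  \<comment> \<open>Both classes have positive probability.\<close>
  have int_slice: "integrable M (\<lambda>\<omega>. l (f (X \<omega>)) v)" if "v \<in> {-1, 1}" for v
    using integrable_comp_slice_marginals[OF M X_meas Y_meas _ pos[OF that],
        where g = "\<lambda>z. l (f (fst z)) (snd z)"] int_D_prod
    by (simp add: distr_distr_Pair_fst distr_distr_Pair_snd)
  have Y_self_indep:
    "measure M {\<omega>\<in>space M. X \<omega> \<in> A \<and> Y \<omega> = b \<and> Y \<omega> = c} * measure M {\<omega>\<in>space M. Y \<omega> = c}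
     = measure M {\<omega>\<in>space M. X \<omega> \<in> A \<and> Y \<omega> = c} * measure M {\<omega>\<in>space M. Y \<omega> = b \<and> Y \<omega> = c}"
    for A b c
    by (cases "b = c") (simp_all cong: conj_cong)
  define \<Delta> where
    "\<Delta> = label_cov M (\<lambda>\<omega>. l (f (X \<omega>)) 1) Y 1 - label_cov M (\<lambda>\<omega>. l (f (X \<omega>)) (-1)) Y 1"
  have "peer_risk (distr M (borel \<Otimes>\<^sub>M label_space) (\<lambda>\<omega>. (X \<omega>, Y \<omega>))) l f
      = cond_prob_gap M Y 1 Y * \<Delta>"
    unfolding \<Delta>_def using int_D_prod
    by (intro peer_risk_cond_indep[OF M X_meas Y_meas Y_meas Y_vals Y_vals pos Y_self_indep g _
          int_slice int_slice])
       (simp_all add: distr_distr_Pair_fst distr_distr_Pair_snd)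
  moreover have "peer_risk (distr M (borel \<Otimes>\<^sub>M label_space) (\<lambda>\<omega>. (X \<omega>, Yt \<omega>))) l f
      = cond_prob_gap M Yt 1 Y * \<Delta>"
    unfolding \<Delta>_def using int_Dt_prod
    by (intro peer_risk_cond_indep[OF M X_meas Y_meas Yt_meas Y_vals Yt_vals pos cond_indep g _
          int_slice int_slice])
       (simp_all add: distr_distr_Pair_fst distr_distr_Pair_snd)
  moreover have "cond_prob_gap M Y 1 Y = 1"
    using cond_prob_gap_binary(1)[OF finite_measure_axioms Y_meas Y_meas Y_vals pos]
    by (simp cong: conj_cong)
  moreover have "cond_prob_gap M Yt 1 Y = 1 - e_neg - e_pos"
    using cond_prob_gap_binary(1)[OF finite_measure_axioms Y_meas Yt_meas Yt_vals pos]
    by (simp add: e_pos_def e_neg_def)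
  ultimately show ?thesis
    by simp
qed

end
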